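(* If $G$ is a permutation graph then $L(G)^2$ is a trapezoid graph.
   Context: A permutation diagram on $n$ points: two horizontal lines $L_1,L_2$, on each of which the points $1,\dots,n$ are placed in some linear order, and for each $k$ the two points labeled $k$ are joined by a straight segment. A permutation graph is the intersection graph of the segments of a permutation diagram. A trapezoid diagram: on each of two horizontal lines $L_1,L_2$ choose $n$ intervals, and for each $k$ connect the left and right endpoints of the $k$-th interval on $L_1$ with the left and right endpoints of the $k$-th interval on $L_2$, giving $n$ trapezoids. A trapezoid graph is the intersection graph of the trapezoids of a trapezoid diagram. For a graph $H$, $L(H)^2$ has the edges of $H$ as vertices, two distinct edges $e,f$ being adjacent if they share an endpoint or some edge of $H$ joins an endpoint of $e$ to an endpoint of $f$. *)

theory Defs
  imports "HOL-Analysis.Analysis"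
begin

definition simple_graph :: "'a set \<Rightarrow> 'a set set \<Rightarrow> bool" where
  "simple_graph V E \<longleftrightarrow> finite V \<and> (\<forall>e\<in>E. e \<subseteq> V \<and> card e = 2)"

text \<open>The two horizontal lines: L1 is y = 1, L2 is y = 0, in the plane real \<times> real.\<close>
definition seg :: "real \<Rightarrow> real \<Rightarrow> (real \<times> real) set" where
  "seg a b = closed_segment (a, 1) (b, 0)"

definition trapezoid :: "real \<Rightarrow> real \<Rightarrow> real \<Rightarrow> real \<Rightarrow> (real \<times> real) set" where
  "trapezoid a1 b1 a2 b2 = convex hull {(a1, 1), (b1, 1), (a2, 0), (b2, 0)}"

text \<open>G is (isomorphic to) the intersection graph of the segments of a permutation diagram:
  p1 v, p2 v are the (pairwise distinct) positions of the point labelled v on L1, L2.\<close>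
definition permutation_graph :: "'a set \<Rightarrow> 'a set set \<Rightarrow> bool" where
  "permutation_graph V E \<longleftrightarrow> simple_graph V E \<and>
     (\<exists>p1 p2 :: 'a \<Rightarrow> real. inj_on p1 V \<and> inj_on p2 V \<and>
        (\<forall>u\<in>V. \<forall>v\<in>V. u \<noteq> v \<longrightarrow>
           ({u, v} \<in> E \<longleftrightarrow> seg (p1 u) (p2 u) \<inter> seg (p1 v) (p2 v) \<noteq> {})))"

definition trapezoid_graph :: "'a set \<Rightarrow> 'a set set \<Rightarrow> bool" where
  "trapezoid_graph V E \<longleftrightarrow> simple_graph V E \<and>
     (\<exists>l1 r1 l2 r2 :: 'a \<Rightarrow> real. (\<forall>v\<in>V. l1 v \<le> r1 v \<and> l2 v \<le> r2 v) \<and>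
        (\<forall>u\<in>V. \<forall>v\<in>V. u \<noteq> v \<longrightarrow>
           ({u, v} \<in> E \<longleftrightarrow>
              trapezoid (l1 u) (r1 u) (l2 u) (r2 u) \<inter> trapezoid (l1 v) (r1 v) (l2 v) (r2 v) \<noteq> {})))"

definition line_graph_sq_edges :: "'a set set \<Rightarrow> 'a set set set" where
  "line_graph_sq_edges E = {{e, f} | e f. e \<in> E \<and> f \<in> E \<and> e \<noteq> f \<and>
      (e \<inter> f \<noteq> {} \<or> (\<exists>x\<in>e. \<exists>y\<in>f. {x, y} \<in> E))}"

end

theory Submission
  imports Defs
begin

text \<open>Give the edge uv of G the trapezoid spanned by the segments of u and v, i.e. the intervals
  [min, max] of their positions on each line. Segments of u and v cross iff u and v are incomparable
  in the dominance order (p1 u < p1 v and p2 u < p2 v), and two trapezoids are disjoint as soon as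
  one lies strictly left of the other on both lines. If e and f share a vertex, their trapezoids share that
  vertex's segment; if an edge xy of G joins them, the crossing segments of x and y meet. Otherwise
  every endpoint of e is comparable to every endpoint of f, while the endpoints of each edge are
  incomparable, so by transitivity all of e lies below all of f or vice versa, and the trapezoids
  are separated.\<close>

lemma convex_hulls_disjoint_if_separated:
  fixes w :: "'a::real_inner"
  assumes "\<forall>q\<in>A. inner w q < k" and "\<forall>q\<in>B. inner w q > k"
  shows "convex hull A \<inter> convex hull B = {}"
proof -
  have "convex hull A \<subseteq> {q. inner w q < k}"
    using assms(1) by (intro hull_minimal) (auto simp: convex_halfspace_lt)
  moreover have "convex hull B \<subseteq> {q. inner w q > k}"
    using assms(2) by (intro hull_minimal) (auto simp: convex_halfspace_gt)
  ultimately show ?thesis by fastforce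
qed

lemma convex_contains_horizontal_between:
  fixes S :: "(real \<times> real) set"
  assumes "convex S" "(l, y) \<in> S" "(r, y) \<in> S" "l \<le> t" "t \<le> r"
  shows "(t, y) \<in> S"
proof -
  have "(t, y) \<in> closed_segment (l, y) (r, y)"
    using assms(4,5) by (simp add: closed_segment_same_snd closed_segment_eq_real_ivl)
  then show ?thesis
    using assms(1-3) closed_segment_subset by blast
qed

lemma seg_subset_trapezoid:
  assumes "l1 \<le> a" "a \<le> r1" "l2 \<le> b" "b \<le> r2"
  shows "seg a b \<subseteq> trapezoid l1 r1 l2 r2"
proof -
  let ?T = "trapezoid l1 r1 l2 r2"
  have "convex ?T" "(l1, 1) \<in> ?T" "(r1, 1) \<in> ?T" "(l2, 0) \<in> ?T" "(r2, 0) \<in> ?T"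
    unfolding trapezoid_def by (auto intro: hull_inc)
  then have "(a, 1) \<in> ?T" "(b, 0) \<in> ?T"
    using assms convex_contains_horizontal_between by blast+
  then show ?thesis
    unfolding seg_def using \<open>convex ?T\<close> by (rule closed_segment_subset)
qed

text \<open>Separating line: through the midpoint of the gap (r1 + l1') / 2 on L1 and (r2 + l2') / 2 on L2.\<close>
lemma trapezoids_disjoint_if_left_of:
  assumes "r1 < l1'" "r2 < l2'" "l1 \<le> r1" "l2 \<le> r2" "l1' \<le> r1'" "l2' \<le> r2'"
  shows "trapezoid l1 r1 l2 r2 \<inter> trapezoid l1' r1' l2' r2' = {}"
  unfolding trapezoid_def using assms
  by (intro convex_hulls_disjoint_if_separated[where w = "(2, r2 + l2' - r1 - l1')" and k = "r2 + l2'"])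
    (auto simp: inner_Pair)

lemma seg_eq_trapezoid: "seg a b = trapezoid a a b b"
  by (simp add: seg_def trapezoid_def segment_convex_hull)

lemma seg_crossing_nonempty:
  assumes "a < c" "d < b"
  shows "seg a b \<inter> seg c d \<noteq> {}"
proof -
  define t where "t = (c - a) / ((c - a) + (b - d))"
  have t: "0 \<le> t" "t \<le> 1" "(1 - t) * a + t * b = (1 - t) * c + t * d"
    using assms by (auto simp: t_def field_simps)
  have "((1 - t) * a + t * b, 1 - t) \<in> seg a b \<inter> seg c d"
    unfolding seg_def closed_segment_def using t by (auto intro!: exI[of _ t])
  then show ?thesis by blast
qed

lemma seg_intersect_iff_crossing:
  assumes "a \<noteq> c" "b \<noteq> d"
  shows "seg a b \<inter> seg c d \<noteq> {} \<longleftrightarrow> a < c \<and> d < b \<or> c < a \<and> b < d"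
proof -
  have "seg a b \<inter> seg c d = {}" if "a < c \<and> b < d \<or> c < a \<and> d < b"
    using that trapezoids_disjoint_if_left_of[of a c b d a b c d]
      trapezoids_disjoint_if_left_of[of c a d b c d a b]
    by (auto simp: seg_eq_trapezoid)
  then show ?thesis
    using assms seg_crossing_nonempty[of a c d b] seg_crossing_nonempty[of c a b d]
    by (metis Int_commute linorder_neqE_linordered_idom)
qed

lemma antichains_comparable_ordered:
  assumes trans: "\<And>x y z. L x y \<Longrightarrow> L y z \<Longrightarrow> L x z"
    and comparable: "\<And>x y. x \<in> A \<Longrightarrow> y \<in> B \<Longrightarrow> L x y \<or> L y x"
    and antichain_A: "\<And>x x'. x \<in> A \<Longrightarrow> x' \<in> A \<Longrightarrow> \<not> L x x'"
    and antichain_B: "\<And>y y'. y \<in> B \<Longrightarrow> y' \<in> B \<Longrightarrow> \<not> L y y'"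
  shows "(\<forall>x\<in>A. \<forall>y\<in>B. L x y) \<or> (\<forall>x\<in>A. \<forall>y\<in>B. L y x)"
proof (cases "A = {} \<or> B = {}")
  case False
  then obtain a b where "a \<in> A" "b \<in> B" by blast
  then consider "L a b" | "L b a" using comparable by blast
  then show ?thesis
  proof cases
    case 1
    have "L x b" if "x \<in> A" for x
      using comparable[OF that \<open>b \<in> B\<close>] trans[OF 1] antichain_A[OF \<open>a \<in> A\<close> that] by blast
    then have "L x y" if "x \<in> A" "y \<in> B" for x y
      using comparable[OF that] trans antichain_B[OF that(2) \<open>b \<in> B\<close>] that by blast
    then show ?thesis by blast
  next
    case 2
    have "L b x" if "x \<in> A" for x
      using comparable[OF that \<open>b \<in> B\<close>] trans[OF _ 2] antichain_A[OF that \<open>a \<in> A\<close>] by blast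
    then have "L y x" if "x \<in> A" "y \<in> B" for x y
      using comparable[OF that] trans antichain_B[OF \<open>b \<in> B\<close> that(2)] that by blast
    then show ?thesis by blast
  qed
qed auto

lemma line_graph_sq_edges_iff:
  assumes "e \<in> E" "f \<in> E" "e \<noteq> f"
  shows "{e, f} \<in> line_graph_sq_edges E \<longleftrightarrow> e \<inter> f \<noteq> {} \<or> (\<exists>x\<in>e. \<exists>y\<in>f. {x, y} \<in> E)"
proof -
  define adj where "adj e' f' \<longleftrightarrow> e' \<in> E \<and> f' \<in> E \<and> e' \<noteq> f' \<and>
    (e' \<inter> f' \<noteq> {} \<or> (\<exists>x\<in>e'. \<exists>y\<in>f'. {x, y} \<in> E))" for e' f'
  have adj_sym: "adj e' f' \<Longrightarrow> adj f' e'" for e' f'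
    unfolding adj_def by (metis inf_commute insert_commute)
  have "{e, f} \<in> line_graph_sq_edges E \<longleftrightarrow> (\<exists>e' f'. {e, f} = {e', f'} \<and> adj e' f')"
    unfolding line_graph_sq_edges_def adj_def by (rule mem_Collect_eq)
  also have "\<dots> \<longleftrightarrow> adj e f"
    using adj_sym by (auto simp: doubleton_eq_iff)
  finally show ?thesis
    using assms unfolding adj_def by blast
qed

lemma simple_graph_line_graph_sq:
  assumes "simple_graph V E"
  shows "simple_graph E (line_graph_sq_edges E)"
proof -
  have "finite E"
    using assms unfolding simple_graph_def by (meson Pow_iff finite_Pow_iff finite_subset subsetI)
  then show ?thesis
    unfolding simple_graph_def line_graph_sq_edges_def by (auto simp: card_2_iff)
qed

definition span_trapezoid :: "('a \<Rightarrow> real) \<Rightarrow> ('a \<Rightarrow> real) \<Rightarrow> 'a set \<Rightarrow> (real \<times> real) set" where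
  "span_trapezoid p1 p2 e = trapezoid (Min (p1 ` e)) (Max (p1 ` e)) (Min (p2 ` e)) (Max (p2 ` e))"

lemma seg_subset_span_trapezoid:
  assumes "finite e" "x \<in> e"
  shows "seg (p1 x) (p2 x) \<subseteq> span_trapezoid p1 p2 e"
  unfolding span_trapezoid_def using assms by (intro seg_subset_trapezoid) auto

lemma span_trapezoids_disjoint:
  assumes "finite e" "finite f" "e \<noteq> {}" "f \<noteq> {}"
    and "\<forall>x\<in>e. \<forall>y\<in>f. p1 x < p1 y \<and> p2 x < p2 y"
  shows "span_trapezoid p1 p2 e \<inter> span_trapezoid p1 p2 f = {}"
proof -
  have "Max (p1 ` e) < Min (p1 ` f)" "Max (p2 ` e) < Min (p2 ` f)"
    using assms by simp_all
  then show ?thesis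
    unfolding span_trapezoid_def using assms by (intro trapezoids_disjoint_if_left_of) auto
qed

locale permutation_diagram =
  fixes V :: "'a set" and E :: "'a set set" and p1 p2 :: "'a \<Rightarrow> real"
  assumes simple: "simple_graph V E"
    and inj_p1: "inj_on p1 V" and inj_p2: "inj_on p2 V"
    and adjacent_iff_segs_meet: "\<And>u v. u \<in> V \<Longrightarrow> v \<in> V \<Longrightarrow> u \<noteq> v \<Longrightarrow>
      {u, v} \<in> E \<longleftrightarrow> seg (p1 u) (p2 u) \<inter> seg (p1 v) (p2 v) \<noteq> {}"
begin

definition precedes :: "'a \<Rightarrow> 'a \<Rightarrow> bool" where
  "precedes x y \<longleftrightarrow> p1 x < p1 y \<and> p2 x < p2 y"

lemma precedes_trans: "precedes x y \<Longrightarrow> precedes y z \<Longrightarrow> precedes x z"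
  unfolding precedes_def by auto

lemma edge_doubleton:
  assumes "e \<in> E"
  obtains u v where "e = {u, v}" "u \<noteq> v" "u \<in> V" "v \<in> V"
  using simple assms unfolding simple_graph_def by (metis card_2_iff insert_subset)

lemma finite_edge: "e \<in> E \<Longrightarrow> finite e"
  by (metis edge_doubleton finite.emptyI finite_insert)

lemma edge_nonempty: "e \<in> E \<Longrightarrow> e \<noteq> {}"
  by (metis edge_doubleton insert_not_empty)

lemma edge_subset: "e \<in> E \<Longrightarrow> e \<subseteq> V"
  by (metis edge_doubleton insert_subset empty_subsetI)

lemma adjacent_iff_incomparable:
  assumes "u \<in> V" "v \<in> V" "u \<noteq> v"
  shows "{u, v} \<in> E \<longleftrightarrow> \<not> precedes u v \<and> \<not> precedes v u"
proof -
  have "p1 u \<noteq> p1 v" "p2 u \<noteq> p2 v"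
    using assms inj_p1 inj_p2 by (auto dest: inj_onD)
  then show ?thesis
    using assms by (auto simp: adjacent_iff_segs_meet seg_intersect_iff_crossing precedes_def)
qed

lemma edge_antichain:
  assumes "e \<in> E" "x \<in> e" "x' \<in> e"
  shows "\<not> precedes x x'"
proof -
  obtain u v where uv: "e = {u, v}" "u \<noteq> v" "u \<in> V" "v \<in> V"
    using assms(1) by (rule edge_doubleton)
  then have "\<not> precedes u v" "\<not> precedes v u"
    using assms(1) adjacent_iff_incomparable by auto
  then show ?thesis
    using assms(2,3) uv(1) by (auto simp: precedes_def)
qed

lemma distant_edges_ordered:
  assumes "e \<in> E" "f \<in> E" "e \<inter> f = {}" "\<forall>x\<in>e. \<forall>y\<in>f. {x, y} \<notin> E"
  shows "(\<forall>x\<in>e. \<forall>y\<in>f. precedes x y) \<or> (\<forall>x\<in>e. \<forall>y\<in>f. precedes y x)"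
proof (rule antichains_comparable_ordered[OF precedes_trans])
  show "precedes x y \<or> precedes y x" if "x \<in> e" "y \<in> f" for x y
    using that assms edge_subset adjacent_iff_incomparable[of x y] by blast
  show "\<not> precedes x x'" if "x \<in> e" "x' \<in> e" for x x'
    using assms(1) that by (rule edge_antichain)
  show "\<not> precedes y y'" if "y \<in> f" "y' \<in> f" for y y'
    using assms(2) that by (rule edge_antichain)
qed

lemma line_graph_sq_adjacent_iff_span_trapezoids_meet:
  assumes "e \<in> E" "f \<in> E" "e \<noteq> f"
  shows "{e, f} \<in> line_graph_sq_edges E \<longleftrightarrow>
    span_trapezoid p1 p2 e \<inter> span_trapezoid p1 p2 f \<noteq> {}"
proof
  assume "{e, f} \<in> line_graph_sq_edges E"
  then have "e \<inter> f \<noteq> {} \<or> (\<exists>x\<in>e. \<exists>y\<in>f. {x, y} \<in> E)"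
    using line_graph_sq_edges_iff[OF assms] by blast
  then consider (shared) x where "x \<in> e" "x \<in> f"
    | (joined) x y where "x \<in> e" "y \<in> f" "{x, y} \<in> E" "x \<noteq> y"
    by blast
  then show "span_trapezoid p1 p2 e \<inter> span_trapezoid p1 p2 f \<noteq> {}"
  proof cases
    case shared
    have "(p1 x, 1) \<in> seg (p1 x) (p2 x)"
      by (simp add: seg_def)
    then show ?thesis
      using shared assms seg_subset_span_trapezoid[OF finite_edge] by blast
  next
    case joined
    then have "seg (p1 x) (p2 x) \<inter> seg (p1 y) (p2 y) \<noteq> {}"
      using assms edge_subset adjacent_iff_segs_meet by blast
    then show ?thesis
      using joined assms seg_subset_span_trapezoid[OF finite_edge] by blast
  qed
next
  assume meet: "span_trapezoid p1 p2 e \<inter> span_trapezoid p1 p2 f \<noteq> {}"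
  show "{e, f} \<in> line_graph_sq_edges E"
  proof (rule ccontr)
    assume "{e, f} \<notin> line_graph_sq_edges E"
    then have "(\<forall>x\<in>e. \<forall>y\<in>f. precedes x y) \<or> (\<forall>x\<in>e. \<forall>y\<in>f. precedes y x)"
      using assms line_graph_sq_edges_iff[OF assms] by (intro distant_edges_ordered) auto
    then show False
    proof
      assume "\<forall>x\<in>e. \<forall>y\<in>f. precedes x y"
      then have "span_trapezoid p1 p2 e \<inter> span_trapezoid p1 p2 f = {}"
        using assms by (intro span_trapezoids_disjoint) (auto simp: precedes_def finite_edge edge_nonempty)
      with meet show False by blast
    next
      assume "\<forall>x\<in>e. \<forall>y\<in>f. precedes y x"
      then have "span_trapezoid p1 p2 f \<inter> span_trapezoid p1 p2 e = {}"
        using assms by (intro span_trapezoids_disjoint) (auto simp: precedes_def finite_edge edge_nonempty)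
      with meet show False by blast
    qed
  qed
qed

end

theorem lemma6:
  fixes V :: "'a set" and E :: "'a set set"
  assumes "permutation_graph V E"
  shows "trapezoid_graph E (line_graph_sq_edges E)"
proof -
  obtain p1 p2 where "permutation_diagram V E p1 p2"
    using assms unfolding permutation_graph_def permutation_diagram_def by blast
  then interpret permutation_diagram V E p1 p2 .
  define l1 r1 l2 r2 where "l1 e = Min (p1 ` e)" and "r1 e = Max (p1 ` e)"
    and "l2 e = Min (p2 ` e)" and "r2 e = Max (p2 ` e)" for e
  have "\<forall>e\<in>E. l1 e \<le> r1 e \<and> l2 e \<le> r2 e"
    using finite_edge edge_nonempty by (auto simp: l1_def r1_def l2_def r2_def Min_le_iff ex_in_conv)
  moreover have "\<forall>e\<in>E. \<forall>f\<in>E. e \<noteq> f \<longrightarrow> ({e, f} \<in> line_graph_sq_edges E \<longleftrightarrow>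
      trapezoid (l1 e) (r1 e) (l2 e) (r2 e) \<inter> trapezoid (l1 f) (r1 f) (l2 f) (r2 f) \<noteq> {})"
    using line_graph_sq_adjacent_iff_span_trapezoids_meet
    by (simp add: span_trapezoid_def l1_def r1_def l2_def r2_def)
  ultimately show ?thesis
    unfolding trapezoid_graph_def using simple_graph_line_graph_sq[OF simple] by blast
qed

end
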